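(* Let $\mathbb{R}^2=\bigcup_{a=1}^{n}R_a$ and $\mathbb{R}^2=\bigcup_{b=1}^{n'}R'_b$ be two parabolic subdivisions of $\mathbb{R}^2$. Then the family of all intersections $R_a\cap R'_b$ that have nonempty interior is again a parabolic subdivision of $\mathbb{R}^2$.
   Context: A parabola is a set $\{(u,v): au^2+buv+cv^2+du+ev+f=0\}$ with $(a,b,c,d,e,f)\neq 0$ and $b^2-4ac=0$ (this includes lines and the empty set). A parabolic region is a set $\{s\in\mathbb{R}^2: a_is_1^2+b_is_1s_2+c_is_2^2+d_is_1+e_is_2+f_i\le 0,\ i=1,\dots,k\}$ with each $(a_i,\dots,f_i)\neq 0$ and $b_i^2-4a_ic_i=0$. A parabolic subdivision of a convex set $R$ is a finite union $R=\bigcup_i R_i$ of parabolic regions such that for $j\ne k$, $R_j\cap R_k$ is empty or contained in a parabola. *)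

theory Defs
  imports "HOL-Analysis.Analysis"
begin

type_synonym coeffs6 = "real \<times> real \<times> real \<times> real \<times> real \<times> real"

definition parabolic_coeffs :: "coeffs6 \<Rightarrow> bool" where
  "parabolic_coeffs q \<longleftrightarrow> (case q of (a,b,c,d,e,f) \<Rightarrow>
      (a,b,c,d,e,f) \<noteq> (0,0,0,0,0,0) \<and> b^2 - 4*a*c = 0)"

definition conic_eval :: "coeffs6 \<Rightarrow> real \<times> real \<Rightarrow> real" where
  "conic_eval q s = (case q of (a,b,c,d,e,f) \<Rightarrow> (case s of (u,v) \<Rightarrow>
      a*u^2 + b*u * v + c * v^2 + d*u + e * v + f))"

definition parabola :: "(real \<times> real) set \<Rightarrow> bool" where
  "parabola P \<longleftrightarrow> (\<exists>q. parabolic_coeffs q \<and> P = {s. conic_eval q s = 0})"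

definition parabolic_region :: "(real \<times> real) set \<Rightarrow> bool" where
  "parabolic_region R \<longleftrightarrow> (\<exists>qs :: coeffs6 list.
      (\<forall>q\<in>set qs. parabolic_coeffs q) \<and> R = {s. \<forall>q\<in>set qs. conic_eval q s \<le> 0})"

definition parabolic_subdivision ::
    "(real \<times> real) set \<Rightarrow> ('i \<Rightarrow> (real \<times> real) set) \<Rightarrow> 'i set \<Rightarrow> bool" where
  "parabolic_subdivision S Rs I \<longleftrightarrow>
     convex S \<and> finite I \<and> (\<forall>i\<in>I. parabolic_region (Rs i)) \<and> S = (\<Union>i\<in>I. Rs i) \<and>
     (\<forall>j\<in>I. \<forall>k\<in>I. j \<noteq> k \<longrightarrow>
        Rs j \<inter> Rs k = {} \<or> (\<exists>P. parabola P \<and> Rs j \<inter> Rs k \<subseteq> P))"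

end

theory Submission
  imports Defs
begin

text \<open>Pairwise intersections of parabolic regions are parabolic regions, and two distinct index
  pairs differ in one coordinate, so the overlap of their pieces lies in an overlap of one of the
  given subdivisions. Discarding the pieces with empty interior keeps a cover of the plane: all
  pieces are closed, so the discarded ones form a closed set with empty interior, which cannot
  contain the nonempty open complement of the remaining ones.\<close>

lemma continuous_on_conic_eval: "continuous_on UNIV (conic_eval q)"
proof -
  obtain a b c d e f where q: "q = (a, b, c, d, e, f)" by (cases q) auto
  have "conic_eval q = (\<lambda>s. a * fst s ^ 2 + b * fst s * snd s + c * snd s ^ 2
                              + d * fst s + e * snd s + f)"
    by (auto simp: q conic_eval_def split: prod.splits)
  then show ?thesis by (simp; intro continuous_intros)
qed

lemma closed_parabolic_region:
  assumes "parabolic_region R"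
  shows "closed R"
proof -
  obtain qs where R: "R = {s. \<forall>q\<in>set qs. conic_eval q s \<le> 0}"
    using assms unfolding parabolic_region_def by blast
  have "R = (\<Inter>q\<in>set qs. {s. conic_eval q s \<le> 0})" unfolding R by blast
  moreover have "closed {s. conic_eval q s \<le> 0}" for q
    by (rule closed_Collect_le[OF continuous_on_conic_eval continuous_on_const])
  ultimately show ?thesis by auto
qed

lemma parabolic_region_Int:
  assumes "parabolic_region A" and "parabolic_region B"
  shows "parabolic_region (A \<inter> B)"
proof -
  obtain qs where qs: "\<forall>q\<in>set qs. parabolic_coeffs q" "A = {s. \<forall>q\<in>set qs. conic_eval q s \<le> 0}"
    using assms(1) unfolding parabolic_region_def by blast
  obtain ps where ps: "\<forall>q\<in>set ps. parabolic_coeffs q" "B = {s. \<forall>q\<in>set ps. conic_eval q s \<le> 0}"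
    using assms(2) unfolding parabolic_region_def by blast
  have "\<forall>q\<in>set (qs @ ps). parabolic_coeffs q" using qs(1) ps(1) by auto
  moreover have "A \<inter> B = {s. \<forall>q\<in>set (qs @ ps). conic_eval q s \<le> 0}"
    unfolding qs(2) ps(2) by auto
  ultimately show ?thesis unfolding parabolic_region_def by blast
qed

lemma interior_UN_closed_empty_interior:
  fixes X :: "'i \<Rightarrow> 'a::topological_space set"
  assumes "finite F" and "\<And>i. i \<in> F \<Longrightarrow> closed (X i)" and "\<And>i. i \<in> F \<Longrightarrow> interior (X i) = {}"
  shows "interior (\<Union>i\<in>F. X i) = {}"
  using assms
proof (induction F rule: finite_induct)
  case empty
  then show ?case by simp
next
  case (insert x F)
  have "interior (X x \<union> (\<Union>i\<in>F. X i)) = interior (X x)"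
    using insert by (intro interior_closed_Un_empty_interior) auto
  then show ?case using insert.prems by simp
qed

lemma open_subset_UN_closed_nonempty_interior:
  fixes X :: "'i \<Rightarrow> 'a::topological_space set"
  assumes "open S" and "S \<subseteq> (\<Union>i\<in>J. X i)" and "finite J" and "\<And>i. i \<in> J \<Longrightarrow> closed (X i)"
  shows "S \<subseteq> (\<Union>i\<in>{i\<in>J. interior (X i) \<noteq> {}}. X i)"
proof -
  define K where "K = {i\<in>J. interior (X i) \<noteq> {}}"
  have "closed (\<Union>i\<in>K. X i)"
    using assms(3,4) unfolding K_def by (intro closed_UN) auto
  then have "open (S - (\<Union>i\<in>K. X i))"
    using assms(1) by (intro open_Diff)
  moreover have "S - (\<Union>i\<in>K. X i) \<subseteq> (\<Union>i\<in>J - K. X i)"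
    using assms(2) by blast
  ultimately have "S - (\<Union>i\<in>K. X i) \<subseteq> interior (\<Union>i\<in>J - K. X i)"
    by (rule interior_maximal[rotated])
  also have "\<dots> = {}"
    using assms(3,4) unfolding K_def by (intro interior_UN_closed_empty_interior) auto
  finally show ?thesis unfolding K_def by blast
qed

definition meets_in_parabola :: "(real \<times> real) set \<Rightarrow> (real \<times> real) set \<Rightarrow> bool" where
  "meets_in_parabola A B \<longleftrightarrow> A \<inter> B = {} \<or> (\<exists>P. parabola P \<and> A \<inter> B \<subseteq> P)"

lemma parabolic_subdivision_iff:
  "parabolic_subdivision S X I \<longleftrightarrow>
     convex S \<and> finite I \<and> (\<forall>i\<in>I. parabolic_region (X i)) \<and> S = (\<Union>i\<in>I. X i) \<and>
     (\<forall>j\<in>I. \<forall>k\<in>I. j \<noteq> k \<longrightarrow> meets_in_parabola (X j) (X k))"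
  unfolding parabolic_subdivision_def meets_in_parabola_def ..

lemma meets_in_parabola_Int_subset:
  assumes "meets_in_parabola A B" and "C \<inter> D \<subseteq> A \<inter> B"
  shows "meets_in_parabola C D"
  using assms unfolding meets_in_parabola_def by blast

lemma parabolic_subdivision_subfamily:
  assumes "parabolic_subdivision S X J" and "K \<subseteq> J" and "S = (\<Union>i\<in>K. X i)"
  shows "parabolic_subdivision S X K"
proof -
  have "convex S" "finite J" "\<forall>i\<in>J. parabolic_region (X i)"
    "\<forall>j\<in>J. \<forall>k\<in>J. j \<noteq> k \<longrightarrow> meets_in_parabola (X j) (X k)"
    using assms(1) unfolding parabolic_subdivision_iff by blast+
  with assms(2,3) show ?thesis
    unfolding parabolic_subdivision_iff by (meson finite_subset subsetD)
qed

lemma parabolic_subdivision_nonempty_interior: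
  assumes "parabolic_subdivision S X J" and "open S"
  shows "parabolic_subdivision S X {i\<in>J. interior (X i) \<noteq> {}}"
proof (rule parabolic_subdivision_subfamily[OF assms(1)])
  have S: "S = (\<Union>i\<in>J. X i)" and "finite J" and "\<forall>i\<in>J. parabolic_region (X i)"
    using assms(1) unfolding parabolic_subdivision_iff by blast+
  then have "S \<subseteq> (\<Union>i\<in>{i\<in>J. interior (X i) \<noteq> {}}. X i)"
    by (intro open_subset_UN_closed_nonempty_interior[OF assms(2)]) (auto intro: closed_parabolic_region)
  moreover have "(\<Union>i\<in>{i\<in>J. interior (X i) \<noteq> {}}. X i) \<subseteq> S"
    unfolding S by blast
  ultimately show "S = (\<Union>i\<in>{i\<in>J. interior (X i) \<noteq> {}}. X i)"
    by (rule equalityI)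
qed blast

lemma parabolic_subdivision_Int:
  assumes "parabolic_subdivision S R I" and "parabolic_subdivision S R' I'"
  shows "parabolic_subdivision S (\<lambda>(a, b). R a \<inter> R' b) (I \<times> I')"
proof -
  from assms(1) have "convex S" "finite I" and region: "\<forall>a\<in>I. parabolic_region (R a)"
    and cover: "S = (\<Union>a\<in>I. R a)"
    and meet: "\<forall>a\<in>I. \<forall>a'\<in>I. a \<noteq> a' \<longrightarrow> meets_in_parabola (R a) (R a')"
    unfolding parabolic_subdivision_iff by blast+
  from assms(2) have "finite I'" and region': "\<forall>b\<in>I'. parabolic_region (R' b)"
    and cover': "S = (\<Union>b\<in>I'. R' b)"
    and meet': "\<forall>b\<in>I'. \<forall>b'\<in>I'. b \<noteq> b' \<longrightarrow> meets_in_parabola (R' b) (R' b')"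
    unfolding parabolic_subdivision_iff by blast+
  show ?thesis
    unfolding parabolic_subdivision_iff
  proof (intro conjI ballI impI)
    show "convex S" "finite (I \<times> I')"
      using \<open>convex S\<close> \<open>finite I\<close> \<open>finite I'\<close> by simp_all
    show "S = (\<Union>i\<in>I \<times> I'. case i of (a, b) \<Rightarrow> R a \<inter> R' b)"
    proof
      show "S \<subseteq> (\<Union>i\<in>I \<times> I'. case i of (a, b) \<Rightarrow> R a \<inter> R' b)"
      proof
        fix s assume "s \<in> S"
        then obtain a b where "a \<in> I" "s \<in> R a" "b \<in> I'" "s \<in> R' b"
          using cover cover' by blast
        then show "s \<in> (\<Union>i\<in>I \<times> I'. case i of (a, b) \<Rightarrow> R a \<inter> R' b)" by blast
      qed
      show "(\<Union>i\<in>I \<times> I'. case i of (a, b) \<Rightarrow> R a \<inter> R' b) \<subseteq> S"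
        using cover by blast
    qed
  next
    fix i assume "i \<in> I \<times> I'"
    then show "parabolic_region (case i of (a, b) \<Rightarrow> R a \<inter> R' b)"
      using region region' parabolic_region_Int by auto
  next
    fix j k assume "j \<in> I \<times> I'" "k \<in> I \<times> I'" "j \<noteq> k"
    then obtain a b a' b' where jk: "j = (a, b)" "k = (a', b')" "a \<in> I" "a' \<in> I" "b \<in> I'" "b' \<in> I'"
      and "a \<noteq> a' \<or> b \<noteq> b'"
      by auto
    from \<open>a \<noteq> a' \<or> b \<noteq> b'\<close> have "meets_in_parabola (R a \<inter> R' b) (R a' \<inter> R' b')"
    proof
      assume "a \<noteq> a'"
      then have "meets_in_parabola (R a) (R a')" using meet jk by blast
      then show ?thesis by (rule meets_in_parabola_Int_subset) blast
    next
      assume "b \<noteq> b'"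
      then have "meets_in_parabola (R' b) (R' b')" using meet' jk by blast
      then show ?thesis by (rule meets_in_parabola_Int_subset) blast
    qed
    then show "meets_in_parabola (case j of (a, b) \<Rightarrow> R a \<inter> R' b) (case k of (a, b) \<Rightarrow> R a \<inter> R' b)"
      unfolding jk by simp
  qed
qed

theorem proposition2:
  fixes R R' :: "nat \<Rightarrow> (real \<times> real) set" and n n' :: nat
  assumes "parabolic_subdivision UNIV R {1..n}"
    and "parabolic_subdivision UNIV R' {1..n'}"
  shows "parabolic_subdivision UNIV (\<lambda>(a, b). R a \<inter> R' b)
           {(a, b). a \<in> {1..n} \<and> b \<in> {1..n'} \<and> interior (R a \<inter> R' b) \<noteq> {}}"
proof -
  have "{(a, b). a \<in> {1..n} \<and> b \<in> {1..n'} \<and> interior (R a \<inter> R' b) \<noteq> {}}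
      = {i \<in> {1..n} \<times> {1..n'}. interior ((\<lambda>(a, b). R a \<inter> R' b) i) \<noteq> {}}"
    by auto
  then show ?thesis
    using parabolic_subdivision_nonempty_interior[OF parabolic_subdivision_Int[OF assms] open_UNIV]
    by simp
qed

end
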